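(* The generating function of $(c(n))_{n\ge0}$ is \[ \sum_{n\ge 0}c(n)x^n=\frac{1}{1-x}+\sum_{i\ge 1}\frac{x^{2^{i-1}+1}(1-x^{2^i-1})}{(1-x)(1-x^{2^{i+1}})}, \] and the generating function of $(h(n))_{n\ge 0}$ is \[ \sum_{n\ge 0}h(n)x^n=\sum_{i\ge 1}\frac{x^{2^{i-1}+1}(1-x^{2^i-1})}{(1-x)(1-x^{2^{i+1}})}. \]
   Context: For $i\in\mathbb{N}$ and $n\in\mathbb{N}_0$ let $d_i(n)=2^{i-1}-\left|(n\bmod 2^i)-2^{i-1}\right|$, and let $c(n)$ be the number of distinct values in the set $\{d_i(n): i\in\mathbb{N}\}$. For $k\ge0$ and $0\le m<2^k$ let $\beta_k(m)\in\{0,1\}^k$ be the point whose $j$-th coordinate is the binary digit of $m$ of weight $2^{k-j}$. For $n\ge2$ with $k=\lceil\log_2 n\rceil$, a pair $(n_0,n_1)$ of integers with $n=n_0+n_1$, $n_0\ge n_1\ge1$ is a hypercubic bipartition (HCBP) of $n$ if for some $i\in\{1,\dots,k\}$ the hyperplane $x_i=1/2$ splits $\beta_k(0),\dots,\beta_k(n-1)$ into $n_0$ points on one side and $n_1$ on the other. For $n\ge2$, $h(n)$ is the number of HCBPs of $n$; $h(0)=h(1)=0$. *)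

theory Defs
  imports Complex_Main "HOL-Computational_Algebra.Formal_Power_Series"
begin

definition dd :: "nat \<Rightarrow> nat \<Rightarrow> int" where
  "dd i n = 2^(i-1) - \<bar>int (n mod 2^i) - 2^(i-1)\<bar>"

definition cc :: "nat \<Rightarrow> nat" where
  "cc n = card {dd i n | i. i \<ge> 1}"

definition beta :: "nat \<Rightarrow> nat \<Rightarrow> nat \<Rightarrow> nat" where
  "beta k m j = (m div 2^(k-j)) mod 2"

definition kdim :: "nat \<Rightarrow> nat" where
  "kdim n = nat \<lceil>log 2 (real n)\<rceil>"

text \<open>number of points beta_k(0..n-1) with x_i < 1/2 (coordinate 0), resp. > 1/2 (coordinate 1)\<close>
definition side0 :: "nat \<Rightarrow> nat \<Rightarrow> nat" where
  "side0 n i = card {m. m < n \<and> beta (kdim n) m i = 0}"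

definition side1 :: "nat \<Rightarrow> nat \<Rightarrow> nat" where
  "side1 n i = card {m. m < n \<and> beta (kdim n) m i = 1}"

definition HCBP :: "nat \<Rightarrow> (nat \<times> nat) set" where
  "HCBP n = {(n0, n1). n = n0 + n1 \<and> n0 \<ge> n1 \<and> n1 \<ge> 1 \<and>
      (\<exists>i\<in>{1..kdim n}. (side0 n i = n0 \<and> side1 n i = n1) \<or> (side0 n i = n1 \<and> side1 n i = n0))}"

definition hh :: "nat \<Rightarrow> nat" where
  "hh n = (if n < 2 then 0 else card (HCBP n))"

definition gterm :: "nat \<Rightarrow> real fps" where
  "gterm i = fps_X ^ (2^(i-1) + 1) * (1 - fps_X ^ (2^i - 1))
              / ((1 - fps_X) * (1 - fps_X ^ (2^(i+1))))"

end

theory Submission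
  imports Defs
begin

text \<open>For fixed \<open>n\<close> the triangle waves \<open>d\<^sub>1(n), d\<^sub>2(n), \<dots>\<close> form a nondecreasing sequence that
  stabilises at \<open>n\<close>, and it increases from \<open>d\<^sub>j\<^sub>+\<^sub>1\<close> to \<open>d\<^sub>j\<^sub>+\<^sub>2\<close> exactly when
  \<open>2\<^sup>j < n mod 2\<^sup>j\<^sup>+\<^sup>2 < 3\<cdot>2\<^sup>j\<close>. Hence \<open>c(n) - 1\<close> counts these \<open>j\<close>, and the \<open>i\<close>-th summand of the
  series is the generating function of the \<open>4\<cdot>2\<^sup>i\<^sup>-\<^sup>1\<close>-periodic indicator of this window.
  On the other side, among \<open>0, \<dots>, n - 1\<close> the numbers with binary digit 0 of weight \<open>2\<^sup>b\<close>
  outnumber those with digit 1 by exactly \<open>d\<^sub>b\<^sub>+\<^sub>1(n)\<close>, so an HCBP is determined by such a value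
  below \<open>n\<close>, and \<open>h(n) = c(n) - 1\<close>.\<close>

lemma card_image_atMost_mono:
  fixes f :: "nat \<Rightarrow> 'a::linorder"
  assumes mono: "\<And>j. f j \<le> f (Suc j)"
  shows "card (f ` {..M}) = Suc (card {j. j < M \<and> f j < f (Suc j)})"
proof (induction M)
  case 0
  then show ?case by simp
next
  case (Suc M)
  have image: "f ` {..Suc M} = insert (f (Suc M)) (f ` {..M})" by (auto simp: atMost_Suc)
  show ?case
  proof (cases "f M < f (Suc M)")
    case True
    have "\<forall>i\<le>M. f i \<le> f M" using lift_Suc_mono_le[of f, OF mono] by blast
    then have "f (Suc M) \<notin> f ` {..M}" using True by force
    moreover have "{j. j < Suc M \<and> f j < f (Suc j)} = insert M {j. j < M \<and> f j < f (Suc j)}"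
      using True by auto
    ultimately show ?thesis using Suc by (simp add: image)
  next
    case False
    then have "f (Suc M) = f M" using mono[of M] by simp
    then have "f ` {..Suc M} = f ` {..M}" unfolding image by auto
    moreover have "{j. j < Suc M \<and> f j < f (Suc j)} = {j. j < M \<and> f j < f (Suc j)}"
      using False less_Suc_eq by auto
    ultimately show ?thesis using Suc by simp
  qed
qed

lemma reverse_image_atLeastAtMost: "(\<lambda>i. k - i) ` {1..k} = {..<k::nat}"
proof (intro equalityI subsetI)
  fix b assume "b \<in> {..<k}"
  then have "b = k - (k - b)" "k - b \<in> {1..k}" by auto
  then show "b \<in> (\<lambda>i. k - i) ` {1..k}" by blast
qed auto

lemma fps_periodic_times_one_minus_X_power:
  fixes f :: "nat \<Rightarrow> 'a::comm_ring_1"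
  assumes periodic: "\<And>n. f (n + q) = f n"
  shows "Abs_fps f * (1 - fps_X ^ q) = Abs_fps (\<lambda>n. if n < q then f n else 0)"
proof (rule fps_ext)
  fix n
  have "f (n - q) = f n" if "q \<le> n" using periodic[of "n - q"] that by simp
  then show "fps_nth (Abs_fps f * (1 - fps_X ^ q)) n = fps_nth (Abs_fps (\<lambda>n. if n < q then f n else 0)) n"
    by (simp add: algebra_simps fps_X_power_mult_right_nth)
qed

lemma fps_window_times_one_minus_X:
  assumes "a < b"
  shows "Abs_fps (\<lambda>n. if a < n \<and> n < b then 1 else 0 :: 'a::comm_ring_1) * (1 - fps_X)
           = fps_X ^ (a + 1) - fps_X ^ b"
proof (rule fps_ext)
  fix n
  show "fps_nth (Abs_fps (\<lambda>n. if a < n \<and> n < b then 1 else 0 :: 'a) * (1 - fps_X)) n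
          = fps_nth (fps_X ^ (a + 1) - fps_X ^ b :: 'a fps) n"
    using assms by (cases n) (auto simp: algebra_simps fps_X_power_nth)
qed

lemma dd_Suc: "dd (Suc j) n = 2^j - \<bar>int (n mod 2^Suc j) - 2^j\<bar>"
  by (simp add: dd_def)

lemma dd_bounds: "0 \<le> dd (Suc j) n \<and> dd (Suc j) n \<le> 2^j"
proof -
  have "int (n mod 2^Suc j) < 2 * 2^j"
    using pos_mod_bound[of "2^Suc j" "int n"] by (simp add: zmod_int)
  then show ?thesis unfolding dd_Suc by linarith
qed

lemma dd_eq_self:
  assumes "n \<le> 2^j"
  shows "dd (Suc j) n = int n"
proof -
  have "(2::nat)^j < 2^Suc j" by simp
  then have "n < 2^Suc j" using assms by linarith
  moreover have "int n \<le> 2^j" using assms by (metis of_nat_le_iff of_nat_numeral of_nat_power)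
  ultimately show ?thesis unfolding dd_Suc by simp
qed

lemma dd_Suc_Suc_cases: "dd (Suc (Suc j)) n = dd (Suc j) n \<or> 2^j < dd (Suc (Suc j)) n"
proof -
  define r where "r = int (n mod 2^Suc j)"
  have r: "0 \<le> r" "r < 2 * 2^j"
    using pos_mod_bound[of "2^Suc j" "int n"] by (simp_all add: r_def zmod_int)
  have "n mod (2^Suc j * 2) = 2^Suc j * (n div 2^Suc j mod 2) + n mod 2^Suc j"
    by (rule mod_mult2_eq)
  then have "int (n mod 2^Suc (Suc j)) = r \<or> int (n mod 2^Suc (Suc j)) = r + 2 * 2^j"
    by (cases "even (n div 2^Suc j)") (auto simp: r_def mult.commute elim: oddE)
  moreover have "dd (Suc j) n = 2^j - \<bar>r - 2^j\<bar>" by (simp add: dd_Suc r_def)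
  moreover have "dd (Suc (Suc j)) n = 2 * 2^j - \<bar>int (n mod 2^Suc (Suc j)) - 2 * 2^j\<bar>"
    by (simp add: dd_Suc)
  moreover have "(0::int) < 2^j" by simp
  ultimately show ?thesis using r by linarith
qed

lemma dd_mono: "dd (Suc j) n \<le> dd (Suc (Suc j)) n"
  using dd_Suc_Suc_cases[of j n] dd_bounds[of j n] by linarith

lemma dd_increase_iff:
  "dd (Suc j) n < dd (Suc (Suc j)) n \<longleftrightarrow> 2^j < n mod 2^Suc (Suc j) \<and> n mod 2^Suc (Suc j) < 3 * 2^j"
proof -
  define r where "r = int (n mod 2^Suc (Suc j))"
  have r: "0 \<le> r" "r < 4 * 2^j"
    using pos_mod_bound[of "2^Suc (Suc j)" "int n"] by (simp_all add: r_def zmod_int)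
  have "dd (Suc j) n < dd (Suc (Suc j)) n \<longleftrightarrow> 2^j < dd (Suc (Suc j)) n"
    using dd_Suc_Suc_cases[of j n] dd_bounds[of j n] by linarith
  also have "\<dots> \<longleftrightarrow> 2^j < r \<and> r < 3 * 2^j"
  proof -
    have "dd (Suc (Suc j)) n = 2 * 2^j - \<bar>r - 2 * 2^j\<bar>" by (simp add: dd_Suc r_def)
    then show ?thesis using r by linarith
  qed
  also have "\<dots> \<longleftrightarrow> 2^j < n mod 2^Suc (Suc j) \<and> n mod 2^Suc (Suc j) < 3 * 2^j"
    unfolding r_def by (metis of_nat_less_iff of_nat_mult of_nat_numeral of_nat_power)
  finally show ?thesis .
qed

definition dd_jumps :: "nat \<Rightarrow> nat set" where
  "dd_jumps n = {j. dd (Suc j) n < dd (Suc (Suc j)) n}"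

lemma dd_jumps_subset: "dd_jumps n \<subseteq> {..<n}"
proof
  fix j assume "j \<in> dd_jumps n"
  moreover have "dd (Suc j) n = dd (Suc (Suc j)) n" if "n \<le> j"
  proof -
    have "n \<le> 2^j" using that less_exp[of j] by linarith
    then show ?thesis using dd_eq_self[of n j] dd_eq_self[of n "Suc j"] by simp
  qed
  ultimately show "j \<in> {..<n}" by (force simp: dd_jumps_def)
qed

lemma gterm_Suc: "gterm (Suc j) = Abs_fps (\<lambda>n. of_bool (j \<in> dd_jumps n))"
proof -
  define P :: nat where "P = 2^j"
  have P: "P > 0" by (simp add: P_def)
  have pow: "(2::nat)^Suc (Suc j) = 4 * P" "(2::nat)^Suc j = 2 * P" by (simp_all add: P_def)
  define F :: "real fps" where "F = Abs_fps (\<lambda>n. of_bool (P < n mod (4*P) \<and> n mod (4*P) < 3*P))"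
  have F: "Abs_fps (\<lambda>n. of_bool (j \<in> dd_jumps n)) = F"
    by (simp add: F_def dd_jumps_def dd_increase_iff pow P_def)
  have "F * ((1 - fps_X) * (1 - fps_X ^ (4*P))) = F * (1 - fps_X ^ (4*P)) * (1 - fps_X)"
    by (simp only: ac_simps)
  also have "F * (1 - fps_X ^ (4*P)) = Abs_fps (\<lambda>n. if P < n \<and> n < 3*P then 1 else 0)"
    unfolding F_def by (subst fps_periodic_times_one_minus_X_power) (auto intro!: fps_ext)
  also have "\<dots> * (1 - fps_X) = fps_X^(P+1) - fps_X^(3*P)"
    using fps_window_times_one_minus_X[of P "3*P"] P by simp
  also have "\<dots> = fps_X^(P+1) * (1 - fps_X^(2*P - 1))"
  proof -
    have "P + 1 + (2*P - 1) = 3*P" using P by simp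
    moreover have "fps_X^(P+1) * fps_X^(2*P - 1) = (fps_X^(P + 1 + (2*P - 1)) :: real fps)"
      by (simp only: power_add)
    ultimately have "fps_X^(P+1) * fps_X^(2*P - 1) = (fps_X^(3*P) :: real fps)"
      by simp
    then show ?thesis by (simp only: right_diff_distrib mult_1_right)
  qed
  finally have "gterm (Suc j) = F * ((1 - fps_X) * (1 - fps_X ^ (4*P))) / ((1 - fps_X) * (1 - fps_X ^ (4*P)))"
    by (simp add: gterm_def pow P_def)
  also have "\<dots> = F"
  proof (rule nonzero_mult_div_cancel_right)
    have "fps_nth ((1 - fps_X) * (1 - fps_X ^ (4*P)) :: real fps) 0 = 1" using P by simp
    then show "(1 - fps_X) * (1 - fps_X ^ (4*P)) \<noteq> (0 :: real fps)"
      by (metis fps_zero_nth zero_neq_one)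
  qed
  finally show ?thesis using F by simp
qed

lemma gterm_sums: "(\<lambda>j. gterm (Suc j)) sums Abs_fps (\<lambda>n. real (card (dd_jumps n)))"
  unfolding sums_def gterm_Suc
proof (rule tendsto_fpsI)
  fix n
  have "(\<Sum>j<N. of_bool (j \<in> dd_jumps n)) = real (card (dd_jumps n))" if "n \<le> N" for N
  proof -
    have "dd_jumps n \<subseteq> {..<N}" using dd_jumps_subset[of n] that by auto
    then show ?thesis by (simp add: sum.If_cases Int_absorb1)
  qed
  then show "\<forall>\<^sub>F N in sequentially.
      fps_nth (\<Sum>j<N. Abs_fps (\<lambda>n. of_bool (j \<in> dd_jumps n) :: real)) n
        = fps_nth (Abs_fps (\<lambda>n. real (card (dd_jumps n)))) n"
    by (auto simp: fps_sum_nth eventually_sequentially)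
qed

lemma dd_values_eq:
  assumes "n \<le> 2^K"
  shows "{dd i n | i. i \<ge> 1} = (\<lambda>j. dd (Suc j) n) ` {..K}"
proof -
  have stable: "dd (Suc j) n = dd (Suc K) n" if "K \<le> j" for j
  proof -
    have "(2::nat)^K \<le> 2^j" using that by (simp add: power_increasing)
    then have "n \<le> 2^j" using assms by linarith
    then show ?thesis using assms dd_eq_self[of n j] dd_eq_self[of n K] by simp
  qed
  show ?thesis
  proof (intro equalityI subsetI)
    fix x assume "x \<in> {dd i n | i. i \<ge> 1}"
    then obtain i where "x = dd i n" "1 \<le> i" by auto
    then obtain j where x: "x = dd (Suc j) n" by (cases i) auto
    show "x \<in> (\<lambda>j. dd (Suc j) n) ` {..K}"
      using stable[of j] by (cases "j \<le> K") (auto simp: x)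
  qed force
qed

lemma cc_eq: "cc n = Suc (card (dd_jumps n))"
proof -
  have "cc n = card ((\<lambda>j. dd (Suc j) n) ` {..n})"
    unfolding cc_def using dd_values_eq[of n n] less_exp[of n] by simp
  also have "\<dots> = Suc (card {j. j < n \<and> dd (Suc j) n < dd (Suc (Suc j)) n})"
    by (rule card_image_atMost_mono) (rule dd_mono)
  also have "{j. j < n \<and> dd (Suc j) n < dd (Suc (Suc j)) n} = dd_jumps n"
    using dd_jumps_subset[of n] by (auto simp: dd_jumps_def)
  finally show ?thesis .
qed

lemma kdim_bounds:
  assumes n: "n \<ge> 2"
  shows "kdim n \<ge> 1" "n \<le> 2^kdim n" "2^(kdim n - 1) < n"
proof -
  define L where "L = log 2 (real n)"
  have L: "L > 0" unfolding L_def using n by simp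
  have k: "real (kdim n) = of_int \<lceil>L\<rceil>" unfolding kdim_def L_def
    using L L_def by (simp add: order.strict_implies_order)
  have c: "of_int \<lceil>L\<rceil> - 1 < L \<and> L \<le> of_int \<lceil>L\<rceil>" by (rule ceiling_correct)
  show k1: "kdim n \<ge> 1" using k c L by linarith
  show "n \<le> 2^kdim n"
  proof (rule ccontr)
    assume "\<not> n \<le> 2^kdim n"
    then have "real (kdim n) < L" unfolding L_def using less_log_of_power[of 2 "kdim n" n] by simp
    then show False using k c by linarith
  qed
  show "2^(kdim n - 1) < n"
  proof (rule ccontr)
    assume "\<not> 2^(kdim n - 1) < n"
    then have "L \<le> real (kdim n - 1)" unfolding L_def using log_of_power_le[of n 2 "kdim n - 1"] n by simp
    then show False using k c k1 by simp
  qed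
qed

definition bit_count :: "nat \<Rightarrow> nat \<Rightarrow> nat \<Rightarrow> nat" where
  "bit_count b v n = card {m. m < n \<and> m div 2^b mod 2 = v}"

lemma bit_count_Suc:
  "bit_count b v (Suc n) = bit_count b v n + (if n div 2^b mod 2 = v then 1 else 0)"
proof -
  have "{m. m < Suc n \<and> m div 2^b mod 2 = v}
          = {m. m < n \<and> m div 2^b mod 2 = v} \<union> (if n div 2^b mod 2 = v then {n} else {})"
    by (auto simp: less_Suc_eq)
  then show ?thesis by (simp add: bit_count_def)
qed

lemma dd_Suc_right: "dd (Suc b) (Suc n) = dd (Suc b) n + (if n div 2^b mod 2 = 0 then 1 else -1)"
proof -
  define P :: nat where "P = 2^b"
  have P: "P > 0" by (simp add: P_def)
  have m: "n mod (P * 2) = P * (n div P mod 2) + n mod P" by (rule mod_mult2_eq)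
  have r: "n mod P < P" "n mod (P * 2) < P * 2" using P by simp_all
  have s: "Suc n mod (P * 2) = (if Suc (n mod (P * 2)) = P * 2 then 0 else Suc (n mod (P * 2)))"
    by (rule mod_Suc)
  have dd: "dd (Suc b) n = int P - \<bar>int (n mod (P * 2)) - int P\<bar>"
    "dd (Suc b) (Suc n) = int P - \<bar>int (Suc n mod (P * 2)) - int P\<bar>"
    by (simp_all add: dd_Suc P_def mult.commute)
  show ?thesis
  proof (cases "n div P mod 2 = 0")
    case True
    then have "n mod (P * 2) = n mod P" using m by simp
    then have lt: "n mod (P * 2) < P" using r by simp
    then have "Suc (n mod (P * 2)) \<noteq> P * 2" using P by linarith
    with lt have "int (Suc n mod (P * 2)) = int (n mod (P * 2)) + 1" "int (n mod (P * 2)) < int P"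
      using s by simp_all
    then have "dd (Suc b) (Suc n) = dd (Suc b) n + 1" using dd by linarith
    then show ?thesis using True by (simp add: P_def)
  next
    case False
    then have "P \<le> n mod (P * 2)" using m by simp
    moreover have "int (Suc n mod (P * 2)) = int (n mod (P * 2)) + 1 - (if Suc (n mod (P * 2)) = P * 2 then int P * 2 else 0)"
      using s by auto
    ultimately have "dd (Suc b) (Suc n) = dd (Suc b) n - 1" using dd r by (auto split: if_splits)
    then show ?thesis using False by (simp add: P_def)
  qed
qed

lemma bit_count_sum_diff:
  "bit_count b 0 n + bit_count b 1 n = n \<and> int (bit_count b 0 n) - int (bit_count b 1 n) = dd (Suc b) n"
proof (induction n)
  case 0
  then show ?case by (simp add: bit_count_def dd_def)
next
  case (Suc n)
  have "n div 2^b mod 2 = 0 \<or> n div 2^b mod 2 = 1" by auto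
  then show ?case using Suc by (auto simp: bit_count_Suc dd_Suc_right)
qed

lemma side_sum_diff:
  "side0 n i + side1 n i = n \<and> int (side0 n i) - int (side1 n i) = dd (Suc (kdim n - i)) n"
  using bit_count_sum_diff[of "kdim n - i" n]
  by (simp add: side0_def side1_def bit_count_def beta_def)

lemma dd_less_if_less_kdim:
  assumes "n \<ge> 2" "b < kdim n"
  shows "dd (Suc b) n < int n"
proof -
  have "(2::nat)^b \<le> 2^(kdim n - 1)" using assms(2) by (intro power_increasing) auto
  then have "(2::int)^b < int n" using kdim_bounds(3)[OF assms(1)]
    by (metis le_less_trans of_nat_less_iff of_nat_numeral of_nat_power)
  then show ?thesis using dd_bounds[of b n] by linarith
qed

lemma HCBP_eq_image:
  assumes "n \<ge> 2"
  shows "HCBP n = (\<lambda>i. (side0 n i, side1 n i)) ` {1..kdim n}"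
proof -
  have balance: "0 < side1 n i \<and> side1 n i \<le> side0 n i" if "i \<in> {1..kdim n}" for i
    using side_sum_diff[of n i] dd_less_if_less_kdim[OF assms, of "kdim n - i"]
      dd_bounds[of "kdim n - i" n] that by auto
  show ?thesis
  proof (intro equalityI subsetI)
    fix p assume "p \<in> HCBP n"
    then obtain n0 n1 i where p: "p = (n0, n1)" "n = n0 + n1" "n0 \<ge> n1" and i: "i \<in> {1..kdim n}"
      and s: "(side0 n i = n0 \<and> side1 n i = n1) \<or> (side0 n i = n1 \<and> side1 n i = n0)"
      unfolding HCBP_def by blast
    have "(side0 n i, side1 n i) = p" using s balance[OF i] p by auto
    then show "p \<in> (\<lambda>i. (side0 n i, side1 n i)) ` {1..kdim n}" using i by blast
  next
    fix p assume "p \<in> (\<lambda>i. (side0 n i, side1 n i)) ` {1..kdim n}"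
    then obtain i where i: "i \<in> {1..kdim n}" and p: "p = (side0 n i, side1 n i)" by blast
    show "p \<in> HCBP n"
      unfolding HCBP_def p using i balance[OF i] side_sum_diff[of n i] by auto
  qed
qed

text \<open>Since \<open>n\<^sub>0 + n\<^sub>1 = n\<close>, an HCBP is determined by \<open>n\<^sub>0 - n\<^sub>1\<close>, which for the hyperplane
  \<open>x\<^sub>i = 1/2\<close> is \<open>d\<^sub>k\<^sub>-\<^sub>i\<^sub>+\<^sub>1(n) < n\<close>; the remaining value \<open>d\<^sub>k\<^sub>+\<^sub>1(n) = n\<close> is the one extra
  value counted by \<open>c(n)\<close>.\<close>
lemma cc_eq_Suc_hh_if_ge_2:
  assumes n: "n \<ge> 2"
  shows "cc n = Suc (hh n)"
proof -
  define k where "k = kdim n"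
  define D where "D b = dd (Suc b) n" for b
  let ?diff = "\<lambda>p. int (fst p) - int (snd p)"
  have "inj_on ?diff (HCBP n)" by (rule inj_onI) (auto simp: HCBP_def)
  moreover have "?diff ` HCBP n = D ` ((\<lambda>i. k - i) ` {1..k})"
    using side_sum_diff[of n] by (simp add: HCBP_eq_image[OF n] image_image D_def k_def)
  ultimately have "hh n = card (D ` {..<k})"
    unfolding reverse_image_atLeastAtMost using n card_image by (fastforce simp: hh_def)
  moreover have "cc n = card (D ` {..k})"
    unfolding cc_def D_def k_def using dd_values_eq[OF kdim_bounds(2)[OF n]] by simp
  moreover have "D ` {..k} = insert (D k) (D ` {..<k})"
    by (metis image_insert lessThan_Suc lessThan_Suc_atMost)
  moreover have "D k = int n" "int n \<notin> D ` {..<k}"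
    using dd_eq_self[OF kdim_bounds(2)[OF n]] dd_less_if_less_kdim[OF n]
    by (force simp: D_def k_def)+
  ultimately show ?thesis by simp
qed

lemma cc_eq_Suc_hh: "cc n = Suc (hh n)"
proof (cases "n \<ge> 2")
  case True
  then show ?thesis by (rule cc_eq_Suc_hh_if_ge_2)
next
  case False
  have "j \<notin> dd_jumps n" for j
  proof
    assume j: "j \<in> dd_jumps n"
    then have "n = 1" "j = 0" using dd_jumps_subset[of n] False by auto
    with j show False by (simp add: dd_jumps_def dd_def)
  qed
  then have "dd_jumps n = {}" by blast
  then show ?thesis using False cc_eq[of n] by (simp add: hh_def)
qed

theorem theorem15:
  shows "summable (\<lambda>j. gterm (Suc j))
     \<and> Abs_fps (\<lambda>n. real (cc n)) = 1 / (1 - fps_X) + (\<Sum>j. gterm (Suc j))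
     \<and> Abs_fps (\<lambda>n. real (hh n)) = (\<Sum>j. gterm (Suc j))"
proof -
  have sum: "(\<Sum>j. gterm (Suc j)) = Abs_fps (\<lambda>n. real (card (dd_jumps n)))"
    using gterm_sums by (rule sums_unique[symmetric])
  have "1 / (1 - fps_X) = (Abs_fps (\<lambda>n. 1) :: real fps)"
    using fps_inverse_one_minus_fps_X by (simp add: fps_divide_unit)
  moreover have "Abs_fps (\<lambda>n. real (cc n)) = Abs_fps (\<lambda>n. 1) + Abs_fps (\<lambda>n. real (card (dd_jumps n)))"
    by (simp add: fps_eq_iff cc_eq)
  moreover have "Abs_fps (\<lambda>n. real (hh n)) = Abs_fps (\<lambda>n. real (card (dd_jumps n)))"
    using cc_eq_Suc_hh cc_eq by simp
  ultimately show ?thesis using gterm_sums sum by (auto simp: sums_iff)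
qed

end
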